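(* The action of $G=\mathrm{SL}_n(\mathbb C)$ on $\mathring X_{u,\beta}$ by simultaneous left multiplication on all weighted flags is free.
   Context: $G=\mathrm{SL}_n(\mathbb C)$, $B_+$ upper triangular, $U_+$ upper unitriangular matrices; $I=\{1,\dots,n-1\}$, $\pm I=I\sqcup(-I)$; $i^*=n-i$, $(-i)^*=-i^*$; $w_0$ longest element of $S_n$. $\phi_i:\mathrm{SL}_2\to G$ places a $2\times2$ block in rows/columns $i,i+1$; $\dot s_i=\phi_i\begin{pmatrix}0&-1\\1&0\end{pmatrix}$, $\dot w=\dot s_{j_1}\cdots\dot s_{j_l}$ for a reduced word of $w$. Weighted flags: elements of $G/U_+$. For $F=g_1U_+$, $F'=g_2U_+$: $F\xrightarrow{w}F'$ (strictly $w$-related) if $g_1^{-1}g_2\in U_+\dot wU_+$; $F\Rightarrow^{w}F'$ (weakly) if $g_1^{-1}g_2\in B_+\dot wB_+$. For $i\in\pm I$: $s_i^+=s_i,s_i^-=\mathrm{id}$ if $i>0$; $s_i^+=\mathrm{id},s_i^-=s_{-i}$ if $i<0$. Double braid word $\beta=(i_1,\dots,i_m)\in(\pm I)^m$, $u\in S_n$ with $u\le\beta$ (i.e. $u\le s^-_{i_m}*\cdots*s^-_{i_1}*s^+_{i_1}*\dots*s^+_{i_m}$ in Bruhat order, $*$ the Demazure product). $\mathring X_{u,\beta}$ is the variety of tuples $(X_0,\dots,X_m,Y_0,\dots,Y_m)$ of weighted flags with $X_c\xrightarrow{s^+_{i_c}}X_{c-1}$ and $Y_{c-1}\xrightarrow{s^-_{i_c^*}}Y_c$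 for $c\in[m]$ (strict $\mathrm{id}$-relation means equality), $Y_m\xrightarrow{w_0u}X_m$, and $Y_0\Rightarrow^{w_0}X_0$. *)

theory Defs
  imports "Jordan_Normal_Form.Determinant" "HOL-Library.Sublist"
begin

text \<open>Matrices are n x n complex matrices with 0-based indices; the simple
  reflection index i (1-based, 1 \<le> i \<le> n-1) acts on rows/columns i-1, i.
  Permutations in S_n are functions nat \<Rightarrow> nat permuting {1..n}.\<close>

definition SLn :: "nat \<Rightarrow> complex mat set" where
  "SLn n = {A \<in> carrier_mat n n. det A = 1}"

definition Bplus :: "nat \<Rightarrow> complex mat set" where
  "Bplus n = {A \<in> SLn n. \<forall>i<n. \<forall>j<n. j < i \<longrightarrow> A $$ (i, j) = 0}"

definition Uplus :: "nat \<Rightarrow> complex mat set" where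
  "Uplus n = {A \<in> carrier_mat n n. (\<forall>i<n. \<forall>j<n. j < i \<longrightarrow> A $$ (i, j) = 0)
                 \<and> (\<forall>i<n. A $$ (i, i) = 1)}"

text \<open>phi_i applied to [[0,-1],[1,0]].\<close>
definition dot_s :: "nat \<Rightarrow> nat \<Rightarrow> complex mat" where
  "dot_s n i = mat n n (\<lambda>(r, c).
      if r = i - 1 \<and> c = i then -1
      else if r = i \<and> c = i - 1 then 1
      else if (r = i - 1 \<or> r = i) \<and> r = c then 0
      else if r = c then 1 else 0)"

definition sperm :: "nat \<Rightarrow> nat \<Rightarrow> nat" where
  "sperm i = (\<lambda>k. if k = i then i + 1 else if k = i + 1 then i else k)"

definition word_prod :: "nat list \<Rightarrow> nat \<Rightarrow> nat" where
  "word_prod js = foldr (\<circ>) (map sperm js) id"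

definition is_word :: "nat \<Rightarrow> (nat \<Rightarrow> nat) \<Rightarrow> nat list \<Rightarrow> bool" where
  "is_word n w js \<longleftrightarrow> (\<forall>j\<in>set js. 1 \<le> j \<and> j < n) \<and> word_prod js = w"

definition perm_length :: "nat \<Rightarrow> (nat \<Rightarrow> nat) \<Rightarrow> nat" where
  "perm_length n w = (LEAST k. \<exists>js. is_word n w js \<and> length js = k)"

definition reduced_word :: "nat \<Rightarrow> (nat \<Rightarrow> nat) \<Rightarrow> nat list \<Rightarrow> bool" where
  "reduced_word n w js \<longleftrightarrow> is_word n w js \<and> length js = perm_length n w"

definition dotw :: "nat \<Rightarrow> (nat \<Rightarrow> nat) \<Rightarrow> complex mat" where
  "dotw n w = foldr (*) (map (dot_s n) (SOME js. reduced_word n w js)) (1\<^sub>m n)"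

definition w0 :: "nat \<Rightarrow> nat \<Rightarrow> nat" where
  "w0 n = (\<lambda>k. if 1 \<le> k \<and> k \<le> n then n + 1 - k else k)"

definition bruhat_le :: "nat \<Rightarrow> (nat \<Rightarrow> nat) \<Rightarrow> (nat \<Rightarrow> nat) \<Rightarrow> bool" where
  "bruhat_le n u w \<longleftrightarrow> (\<exists>js ks. reduced_word n w js \<and> subseq ks js \<and> word_prod ks = u)"

definition demazure :: "nat \<Rightarrow> nat list \<Rightarrow> nat \<Rightarrow> nat" where
  "demazure n js = foldl (\<lambda>w j. if perm_length n (w \<circ> sperm j) > perm_length n w
                                  then w \<circ> sperm j else w) id js"

definition splus :: "int \<Rightarrow> nat \<Rightarrow> nat" where
  "splus i = (if i > 0 then sperm (nat i) else id)"

definition sminus :: "int \<Rightarrow> nat \<Rightarrow> nat" where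
  "sminus i = (if i < 0 then sperm (nat (- i)) else id)"

definition istar :: "nat \<Rightarrow> int \<Rightarrow> int" where
  "istar n i = (if i > 0 then int n - i else - (int n + i))"

definition double_braid_word :: "nat \<Rightarrow> int list \<Rightarrow> bool" where
  "double_braid_word n \<beta> \<longleftrightarrow> (\<forall>i\<in>set \<beta>. i \<noteq> 0 \<and> \<bar>i\<bar> < int n)"

text \<open>u \<le> \<beta>: u \<le> s^-_{i_m} * ... * s^-_{i_1} * s^+_{i_1} * ... * s^+_{i_m}
  (identity factors omitted, as they do not change the Demazure product).\<close>
definition demazure_of_dbw :: "nat \<Rightarrow> int list \<Rightarrow> nat \<Rightarrow> nat" where
  "demazure_of_dbw n \<beta> = demazure n
     (rev (map (\<lambda>i. nat (- i)) (filter (\<lambda>i. i < 0) \<beta>)) @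
      map nat (filter (\<lambda>i. i > 0) \<beta>))"

text \<open>Weighted flags gU_+ represented by g \<in> SL_n.\<close>
definition strict_rel :: "nat \<Rightarrow> (nat \<Rightarrow> nat) \<Rightarrow> complex mat \<Rightarrow> complex mat \<Rightarrow> bool" where
  "strict_rel n w g1 g2 \<longleftrightarrow>
     (\<exists>a\<in>Uplus n. \<exists>b\<in>Uplus n. g2 = g1 * a * dotw n w * b)"

definition weak_rel :: "nat \<Rightarrow> (nat \<Rightarrow> nat) \<Rightarrow> complex mat \<Rightarrow> complex mat \<Rightarrow> bool" where
  "weak_rel n w g1 g2 \<longleftrightarrow>
     (\<exists>a\<in>Bplus n. \<exists>b\<in>Bplus n. g2 = g1 * a * dotw n w * b)"

definition same_flag :: "nat \<Rightarrow> complex mat \<Rightarrow> complex mat \<Rightarrow> bool" where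
  "same_flag n g1 g2 \<longleftrightarrow> (\<exists>a\<in>Uplus n. g2 = g1 * a)"

definition in_X :: "nat \<Rightarrow> (nat \<Rightarrow> nat) \<Rightarrow> int list
                    \<Rightarrow> (nat \<Rightarrow> complex mat) \<Rightarrow> (nat \<Rightarrow> complex mat) \<Rightarrow> bool" where
  "in_X n u \<beta> X Y \<longleftrightarrow> (let m = length \<beta> in
      (\<forall>c\<le>m. X c \<in> SLn n \<and> Y c \<in> SLn n)
    \<and> (\<forall>c\<in>{1..m}. strict_rel n (splus (\<beta> ! (c - 1))) (X c) (X (c - 1)))
    \<and> (\<forall>c\<in>{1..m}. strict_rel n (sminus (istar n (\<beta> ! (c - 1)))) (Y (c - 1)) (Y c))
    \<and> strict_rel n (w0 n \<circ> u) (Y m) (X m)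
    \<and> weak_rel n (w0 n) (Y 0) (X 0))"

end

theory Submission
  imports Defs
begin

(* Only the pair (X_0, Y_0) matters. Write X_0 = Y_0 p w_0 q with p, q in B_+. If g fixes both
   weighted flags, then g Y_0 = Y_0 b and g X_0 = X_0 a with a, b in U_+, so b p w_0 q = p w_0 q a,
   i.e. p^-1 b p = w_0 (q a q^-1) w_0^-1. The left side is upper unitriangular and the right side
   is lower triangular, hence b = 1 and therefore g = 1. *)

lemma index_mult_mat_sum:
  fixes A B :: "'a::semiring_0 mat"
  assumes "A \<in> carrier_mat n n" "B \<in> carrier_mat n n" "i < n" "j < n"
  shows "(A * B) $$ (i, j) = (\<Sum>k<n. A $$ (i, k) * B $$ (k, j))"
  using assms by (auto simp: scalar_prod_def lessThan_atLeast0 intro!: sum.cong)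

lemma upper_triangular_entry:
  "A \<in> carrier_mat n n \<Longrightarrow> upper_triangular A \<Longrightarrow> j < i \<Longrightarrow> i < n \<Longrightarrow> A $$ (i, j) = 0"
  by auto

lemma upper_triangular_mult:
  fixes A B :: "'a::semiring_0 mat"
  assumes cA: "A \<in> carrier_mat n n" and tA: "upper_triangular A"
    and cB: "B \<in> carrier_mat n n" and tB: "upper_triangular B"
  shows "upper_triangular (A * B)"
proof
  fix i j assume ij: "j < i" "i < dim_row (A * B)"
  have "(A * B) $$ (i, j) = (\<Sum>k<n. A $$ (i, k) * B $$ (k, j))"
    using index_mult_mat_sum[OF cA cB] ij cA by auto
  also have "\<dots> = 0"
  proof (rule sum.neutral, intro ballI)
    fix k assume "k \<in> {..<n}"
    then show "A $$ (i, k) * B $$ (k, j) = 0"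
      using upper_triangular_entry[OF cA tA, of k i] upper_triangular_entry[OF cB tB, of j k] ij cA
      by (cases "k < i") auto
  qed
  finally show "(A * B) $$ (i, j) = 0" .
qed

lemma upper_triangular_mult_diag:
  fixes A B :: "'a::semiring_0 mat"
  assumes cA: "A \<in> carrier_mat n n" and tA: "upper_triangular A"
    and cB: "B \<in> carrier_mat n n" and tB: "upper_triangular B"
    and i: "i < n"
  shows "(A * B) $$ (i, i) = A $$ (i, i) * B $$ (i, i)"
proof -
  have "(A * B) $$ (i, i) = (\<Sum>k<n. A $$ (i, k) * B $$ (k, i))"
    using index_mult_mat_sum[OF cA cB] i by auto
  also have "\<dots> = (\<Sum>k<n. if k = i then A $$ (i, i) * B $$ (i, i) else 0)"
  proof (rule sum.cong[OF refl])
    fix k assume "k \<in> {..<n}"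
    then show "A $$ (i, k) * B $$ (k, i) = (if k = i then A $$ (i, i) * B $$ (i, i) else 0)"
      using upper_triangular_entry[OF cA tA, of k i] upper_triangular_entry[OF cB tB, of i k] i
      by (cases "k < i"; cases "k = i") auto
  qed
  also have "\<dots> = A $$ (i, i) * B $$ (i, i)"
    using i by simp
  finally show ?thesis .
qed

lemma upper_triangular_diag_nonzero:
  fixes A :: "'a::idom mat"
  assumes "A \<in> carrier_mat n n" "upper_triangular A" "det A \<noteq> 0" "i < n"
  shows "A $$ (i, i) \<noteq> 0"
  using assms by (auto simp: det_upper_triangular prod_list_zero_iff diag_mat_def)

lemma upper_triangular_left_inverse:
  fixes A B :: "'a::idom mat"
  assumes cA: "A \<in> carrier_mat n n" and tA: "upper_triangular A" and dA: "det A \<noteq> 0"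
    and cB: "B \<in> carrier_mat n n" and BA: "B * A = 1\<^sub>m n"
  shows "upper_triangular B"
proof -
  have "\<forall>i<n. j < i \<longrightarrow> B $$ (i, j) = 0" for j
  proof (induction j rule: less_induct)
    case (less j)
    show ?case
    proof (intro allI impI)
      fix i assume i: "i < n" "j < i"
      have "0 = (B * A) $$ (i, j)"
        using BA i by simp
      also have "\<dots> = (\<Sum>k<n. B $$ (i, k) * A $$ (k, j))"
        using index_mult_mat_sum[OF cB cA] i by auto
      also have "\<dots> = (\<Sum>k<n. if k = j then B $$ (i, j) * A $$ (j, j) else 0)"
      proof (rule sum.cong[OF refl])
        fix k assume "k \<in> {..<n}"
        then show "B $$ (i, k) * A $$ (k, j) = (if k = j then B $$ (i, j) * A $$ (j, j) else 0)"
          using less i upper_triangular_entry[OF cA tA, of j k]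
          by (cases "k < j"; cases "k = j") auto
      qed
      also have "\<dots> = B $$ (i, j) * A $$ (j, j)"
        using i by simp
      finally show "B $$ (i, j) = 0"
        using upper_triangular_diag_nonzero[OF cA tA dA, of j] i by simp
    qed
  qed
  then show ?thesis
    using cB by auto
qed

lemma det_nonzero_imp_inverse:
  fixes A :: "'a::field mat"
  assumes "A \<in> carrier_mat n n" "det A \<noteq> 0"
  obtains B where "B \<in> carrier_mat n n" "B * A = 1\<^sub>m n" "A * B = 1\<^sub>m n"
  using det_non_zero_imp_unit[OF assms, unfolded Units_def, of "()"]
  by (auto simp: ring_mat_def)

lemma left_inverse_mult_cancel:
  fixes A' A B :: "'a::semiring_1 mat"
  assumes "A' \<in> carrier_mat n n" "A \<in> carrier_mat n n" "B \<in> carrier_mat n m" "A' * A = 1\<^sub>m n"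
  shows "A' * (A * B) = B"
  using assms by (simp add: left_mult_one_mat[OF assms(3)] flip: assoc_mult_mat[of A' n n A n B m])

lemma upper_triangular_inverse:
  fixes p :: "'a::field mat"
  assumes cp: "p \<in> carrier_mat n n" and tp: "upper_triangular p" and dp: "det p \<noteq> 0"
  obtains p' where "p' \<in> carrier_mat n n" "upper_triangular p'" "p' * p = 1\<^sub>m n" "p * p' = 1\<^sub>m n"
  by (metis det_nonzero_imp_inverse[OF cp dp] upper_triangular_left_inverse[OF cp tp dp])

definition antidiagonal :: "nat \<Rightarrow> 'a::zero mat \<Rightarrow> bool" where
  "antidiagonal n M \<longleftrightarrow> M \<in> carrier_mat n n \<and> (\<forall>r<n. \<forall>c<n. M $$ (r, c) \<noteq> 0 \<longleftrightarrow> r + c + 1 = n)"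

lemma antidiagonal_mult_entries:
  fixes A M :: "'a::semiring_0 mat"
  assumes M: "antidiagonal n M" and cA: "A \<in> carrier_mat n n"
    and r: "r < n" and c: "c < n"
  shows "(A * M) $$ (r, c) = A $$ (r, n - 1 - c) * M $$ (n - 1 - c, c)"
    and "(M * A) $$ (r, c) = M $$ (r, n - 1 - r) * A $$ (n - 1 - r, c)"
proof -
  have cM: "M \<in> carrier_mat n n" and nz: "\<And>r c. r < n \<Longrightarrow> c < n \<Longrightarrow> M $$ (r, c) \<noteq> 0 \<longleftrightarrow> r + c + 1 = n"
    using M unfolding antidiagonal_def by auto
  have "(A * M) $$ (r, c) = (\<Sum>k<n. A $$ (r, k) * M $$ (k, c))"
    using index_mult_mat_sum[OF cA cM r c] .
  also have "\<dots> = (\<Sum>k<n. if k = n - 1 - c then A $$ (r, k) * M $$ (k, c) else 0)"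
  proof (rule sum.cong[OF refl])
    fix k assume "k \<in> {..<n}"
    then show "A $$ (r, k) * M $$ (k, c) = (if k = n - 1 - c then A $$ (r, k) * M $$ (k, c) else 0)"
      using nz[of k c] c by (cases "k + c + 1 = n") auto
  qed
  finally show "(A * M) $$ (r, c) = A $$ (r, n - 1 - c) * M $$ (n - 1 - c, c)"
    using c by simp
  have "(M * A) $$ (r, c) = (\<Sum>k<n. M $$ (r, k) * A $$ (k, c))"
    using index_mult_mat_sum[OF cM cA r c] .
  also have "\<dots> = (\<Sum>k<n. if k = n - 1 - r then M $$ (r, k) * A $$ (k, c) else 0)"
  proof (rule sum.cong[OF refl])
    fix k assume "k \<in> {..<n}"
    then show "M $$ (r, k) * A $$ (k, c) = (if k = n - 1 - r then M $$ (r, k) * A $$ (k, c) else 0)"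
      using nz[of r k] r by (cases "r + k + 1 = n") auto
  qed
  finally show "(M * A) $$ (r, c) = M $$ (r, n - 1 - r) * A $$ (n - 1 - r, c)"
    using r by simp
qed

text \<open>Conjugation by an antidiagonal matrix exchanges upper and lower triangular matrices,
  so B, being conjugate to A by M, is both upper unitriangular and lower triangular.\<close>
lemma upper_unitriangular_eq_one_if_antidiagonal_conj:
  fixes A B M :: "'a::semiring_1_no_zero_divisors mat"
  assumes cB: "B \<in> carrier_mat n n" and tB: "upper_triangular B" and dB: "\<forall>i<n. B $$ (i, i) = 1"
    and cA: "A \<in> carrier_mat n n" and tA: "upper_triangular A"
    and M: "antidiagonal n M" and BM: "B * M = M * A"
  shows "B = 1\<^sub>m n"
proof -
  have nz: "\<And>r c. r < n \<Longrightarrow> c < n \<Longrightarrow> M $$ (r, c) \<noteq> 0 \<longleftrightarrow> r + c + 1 = n"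
    using M unfolding antidiagonal_def by auto
  have above_diag: "B $$ (r, k) = 0" if rk: "r < k" "k < n" for r k
  proof -
    define c where "c = n - 1 - k"
    have c: "c < n" "n - 1 - c = k" "c < n - 1 - r" "k + c + 1 = n"
      using rk unfolding c_def by auto
    have "B $$ (r, k) * M $$ (k, c) = (B * M) $$ (r, c)"
      using antidiagonal_mult_entries(1)[OF M cB _ c(1)] rk c by simp
    also have "\<dots> = M $$ (r, n - 1 - r) * A $$ (n - 1 - r, c)"
      unfolding BM using antidiagonal_mult_entries(2)[OF M cA _ c(1)] rk by simp
    also have "\<dots> = 0"
      using upper_triangular_entry[OF cA tA c(3)] rk by simp
    finally show ?thesis
      using nz[of k c] c rk by simp
  qed
  show ?thesis
  proof (rule eq_matI)
    fix i j assume "i < dim_row (1\<^sub>m n)" "j < dim_col (1\<^sub>m n)"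
    then have ij: "i < n" "j < n" by auto
    then show "B $$ (i, j) = 1\<^sub>m n $$ (i, j)"
      using above_diag[of i j] dB upper_triangular_entry[OF cB tB, of j i]
      by (cases i j rule: linorder_cases) auto
  qed (use cB in auto)
qed

lemma dot_s_carrier: "dot_s n i \<in> carrier_mat n n"
  unfolding dot_s_def by auto

text \<open>Matrix indices are 0-based while permutations act on {1..n}: row r stands for the point r + 1.\<close>
lemma dot_s_entry:
  assumes "1 \<le> i" "i < n" "r < n" "k < n"
  shows "dot_s n i $$ (r, k) = (if Suc k = sperm i (Suc r) then (if r = i - 1 then -1 else 1) else 0)"
  using assms unfolding dot_s_def sperm_def by auto

lemma sperm_involution: "sperm i (sperm i x) = x"
  unfolding sperm_def by auto

lemma word_prod_Nil: "word_prod [] = id"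
  unfolding word_prod_def by simp

lemma word_prod_Cons: "word_prod (j # js) = sperm j \<circ> word_prod js"
  unfolding word_prod_def by simp

lemma word_prod_append: "word_prod (xs @ ys) = word_prod xs \<circ> word_prod ys"
  by (induction xs) (simp_all add: word_prod_Nil word_prod_Cons)

lemma dot_s_word_nonzero_iff:
  assumes "\<forall>j\<in>set js. 1 \<le> j \<and> j < n"
  shows "foldr (*) (map (dot_s n) js) (1\<^sub>m n) \<in> carrier_mat n n \<and>
    (\<forall>r<n. \<forall>c<n. foldr (*) (map (dot_s n) js) (1\<^sub>m n) $$ (r, c) \<noteq> 0 \<longleftrightarrow>
                   Suc r = word_prod js (Suc c))"
  using assms
proof (induction js)
  case Nil
  then show ?case by (auto simp: word_prod_Nil)
next
  case (Cons i js)
  let ?F = "foldr (*) (map (dot_s n) js) (1\<^sub>m n)"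
  have cF: "?F \<in> carrier_mat n n"
    and F: "\<And>r c. r < n \<Longrightarrow> c < n \<Longrightarrow> ?F $$ (r, c) \<noteq> 0 \<longleftrightarrow> Suc r = word_prod js (Suc c)"
    using Cons by auto
  have i: "1 \<le> i" "i < n"
    using Cons.prems by auto
  have "(dot_s n i * ?F) $$ (r, c) \<noteq> 0 \<longleftrightarrow> Suc r = word_prod (i # js) (Suc c)"
    if rc: "r < n" "c < n" for r c
  proof -
    define k where "k = sperm i (Suc r) - 1"
    have k: "Suc k = sperm i (Suc r)" "k < n"
      using i rc unfolding k_def sperm_def by auto
    have "(dot_s n i * ?F) $$ (r, c) = (\<Sum>l<n. dot_s n i $$ (r, l) * ?F $$ (l, c))"
      using index_mult_mat_sum[OF dot_s_carrier cF rc] .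
    also have "\<dots> = (\<Sum>l<n. if l = k then (if r = i - 1 then -1 else 1) * ?F $$ (k, c) else 0)"
      using k(1) by (intro sum.cong) (auto simp: dot_s_entry[OF i rc(1)])
    also have "\<dots> = (if r = i - 1 then -1 else 1) * ?F $$ (k, c)"
      using k(2) by simp
    finally have "(dot_s n i * ?F) $$ (r, c) \<noteq> 0 \<longleftrightarrow> Suc k = word_prod js (Suc c)"
      using F[OF k(2) rc(2)] by simp
    also have "\<dots> \<longleftrightarrow> Suc r = word_prod (i # js) (Suc c)"
      unfolding k(1) word_prod_Cons by (metis comp_apply sperm_involution)
    finally show ?thesis .
  qed
  then show ?case
    using cF mult_carrier_mat[OF dot_s_carrier cF] by simp
qed

lemma reduced_word_exists:
  assumes "is_word n w js"
  shows "\<exists>ks. reduced_word n w ks"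
proof -
  have "\<exists>ks. is_word n w ks \<and> length ks = perm_length n w"
    unfolding perm_length_def by (rule LeastI_ex) (use assms in blast)
  then show ?thesis
    unfolding reduced_word_def .
qed

lemma dotw_nonzero_iff:
  assumes "is_word n w js"
  shows "dotw n w \<in> carrier_mat n n"
    and "r < n \<Longrightarrow> c < n \<Longrightarrow> dotw n w $$ (r, c) \<noteq> 0 \<longleftrightarrow> Suc r = w (Suc c)"
proof -
  let ?ks = "SOME ks. reduced_word n w ks"
  have "reduced_word n w ?ks"
    using reduced_word_exists[OF assms] by (rule someI_ex)
  then have ks: "\<forall>j\<in>set ?ks. 1 \<le> j \<and> j < n" "word_prod ?ks = w"
    unfolding reduced_word_def is_word_def by blast+
  show "dotw n w \<in> carrier_mat n n"
    "r < n \<Longrightarrow> c < n \<Longrightarrow> dotw n w $$ (r, c) \<noteq> 0 \<longleftrightarrow> Suc r = w (Suc c)"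
    using dot_s_word_nonzero_iff[OF ks(1)] unfolding dotw_def ks(2) by auto
qed

fun w0_word :: "nat \<Rightarrow> nat list" where
  "w0_word 0 = []"
| "w0_word (Suc m) = [1..<Suc m] @ w0_word m"

lemma word_prod_upt:
  "word_prod [1..<Suc m] = (\<lambda>k. if 1 \<le> k \<and> k \<le> m then k + 1 else if k = m + 1 then 1 else k)"
proof (induction m)
  case 0
  then show ?case by (auto simp: word_prod_Nil)
next
  case (Suc m)
  have "word_prod [1..<Suc (Suc m)] = word_prod [1..<Suc m] \<circ> sperm (Suc m)"
    by (simp add: word_prod_append word_prod_Cons word_prod_Nil)
  then show ?case
    unfolding Suc.IH by (auto simp: sperm_def fun_eq_iff)
qed

lemma is_word_w0_word: "is_word m (w0 m) (w0_word m)"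
proof (induction m)
  case 0
  then show ?case by (auto simp: is_word_def word_prod_Nil w0_def)
next
  case (Suc m)
  have "word_prod (w0_word (Suc m)) = word_prod [1..<Suc m] \<circ> w0 m"
    using Suc.IH by (simp add: is_word_def word_prod_append)
  also have "\<dots> = w0 (Suc m)"
    unfolding word_prod_upt by (auto simp: w0_def fun_eq_iff)
  finally show ?case
    using Suc.IH by (auto simp: is_word_def)
qed

lemma antidiagonal_dotw_w0: "antidiagonal n (dotw n (w0 n))"
  unfolding antidiagonal_def
  using dotw_nonzero_iff[OF is_word_w0_word] by (auto simp: w0_def)

lemma UplusD:
  "a \<in> Uplus n \<Longrightarrow> a \<in> carrier_mat n n \<and> upper_triangular a \<and> (\<forall>i<n. a $$ (i, i) = 1)"
  unfolding Uplus_def by auto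

lemma BplusD:
  "p \<in> Bplus n \<Longrightarrow> p \<in> carrier_mat n n \<and> upper_triangular p \<and> det p \<noteq> 0"
  unfolding Bplus_def SLn_def by auto

lemma Uplus_conj_big_cell_eq_one:
  assumes p: "p \<in> Bplus n" and q: "q \<in> Bplus n" and M: "antidiagonal n M"
    and a: "a \<in> Uplus n" and b: "b \<in> Uplus n"
    and commute: "b * (p * M * q) = p * M * q * a"
  shows "b = 1\<^sub>m n"
proof -
  have cp: "p \<in> carrier_mat n n" and tp: "upper_triangular p"
    and cq: "q \<in> carrier_mat n n" and tq: "upper_triangular q"
    using BplusD[OF p] BplusD[OF q] by auto
  obtain p' where cp': "p' \<in> carrier_mat n n" and tp': "upper_triangular p'"
    and p'p: "p' * p = 1\<^sub>m n" and pp': "p * p' = 1\<^sub>m n"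
    using BplusD[OF p] upper_triangular_inverse by blast
  obtain q' where cq': "q' \<in> carrier_mat n n" and tq': "upper_triangular q'"
    and qq': "q * q' = 1\<^sub>m n"
    using BplusD[OF q] upper_triangular_inverse by blast
  have ca: "a \<in> carrier_mat n n" and ta: "upper_triangular a"
    and cb: "b \<in> carrier_mat n n" and tb: "upper_triangular b" and db: "\<forall>i<n. b $$ (i, i) = 1"
    using UplusD[OF a] UplusD[OF b] by auto
  have cM: "M \<in> carrier_mat n n"
    using M unfolding antidiagonal_def by simp
  note carriers = cp cq cp' cq' ca cb cM
  note assoc = assoc_mult_mat[of _ n n _ n _ n] mult_carrier_mat[of _ n n _ n]
    left_inverse_mult_cancel[where m = n]
  have "p' * b * p * M = p' * (b * (p * M * q)) * q'"
    using carriers qq' by (simp add: assoc)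
  also have "\<dots> = M * (q * a * q')"
    unfolding commute using carriers p'p by (simp add: assoc)
  finally have conj: "p' * b * p * M = M * (q * a * q')" .
  have "p' * b * p = 1\<^sub>m n"
  proof (rule upper_unitriangular_eq_one_if_antidiagonal_conj[OF _ _ _ _ _ M conj])
    show "p' * b * p \<in> carrier_mat n n" "q * a * q' \<in> carrier_mat n n"
      using carriers by auto
    show "upper_triangular (p' * b * p)" "upper_triangular (q * a * q')"
      using carriers tp tq tp' tq' ta tb by (auto intro!: upper_triangular_mult)
    have cp'b: "p' * b \<in> carrier_mat n n" and tp'b: "upper_triangular (p' * b)"
      using carriers tp' tb by (auto intro: upper_triangular_mult)
    have "(p' * b * p) $$ (i, i) = 1" if i: "i < n" for i
    proof -
      have "(p' * b * p) $$ (i, i) = (p' * b) $$ (i, i) * p $$ (i, i)"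
        using upper_triangular_mult_diag[OF cp'b tp'b cp tp i] .
      also have "\<dots> = p' $$ (i, i) * p $$ (i, i)"
        using upper_triangular_mult_diag[OF cp' tp' cb tb i] db i by simp
      also have "\<dots> = (p' * p) $$ (i, i)"
        using upper_triangular_mult_diag[OF cp' tp' cp tp i] by simp
      finally show ?thesis
        using p'p i by simp
    qed
    then show "\<forall>i<n. (p' * b * p) $$ (i, i) = 1"
      by blast
  qed
  moreover have "b = p * (p' * b * p) * p'"
    using carriers pp' by (simp add: assoc)
  ultimately show ?thesis
    using carriers pp' by simp
qed

lemma stabilizer_weak_w0_rel_trivial:
  assumes Y: "Y \<in> SLn n" and g: "g \<in> carrier_mat n n"
    and YX: "weak_rel n (w0 n) Y X"
    and gX: "same_flag n X (g * X)" and gY: "same_flag n Y (g * Y)"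
  shows "g = 1\<^sub>m n"
proof -
  let ?M = "dotw n (w0 n)"
  have cY: "Y \<in> carrier_mat n n" and dY: "det Y \<noteq> 0"
    using Y unfolding SLn_def by auto
  obtain Y' where cY': "Y' \<in> carrier_mat n n" and Y'Y: "Y' * Y = 1\<^sub>m n" and YY': "Y * Y' = 1\<^sub>m n"
    using det_nonzero_imp_inverse[OF cY dY] .
  obtain p q where p: "p \<in> Bplus n" and q: "q \<in> Bplus n" and X: "X = Y * p * ?M * q"
    using YX unfolding weak_rel_def by blast
  obtain a where a: "a \<in> Uplus n" and ga: "g * X = X * a"
    using gX unfolding same_flag_def by blast
  obtain b where b: "b \<in> Uplus n" and gb: "g * Y = Y * b"
    using gY unfolding same_flag_def by blast
  note carriers = cY cY' g BplusD[OF p, THEN conjunct1] BplusD[OF q, THEN conjunct1]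
    UplusD[OF a, THEN conjunct1] UplusD[OF b, THEN conjunct1]
    antidiagonal_dotw_w0[unfolded antidiagonal_def, THEN conjunct1]
  note assoc = assoc_mult_mat[of _ n n _ n _ n] mult_carrier_mat[of _ n n _ n]
    left_inverse_mult_cancel[where m = n]
  have "b * (p * ?M * q) = Y' * (g * Y) * (p * ?M * q)"
    using carriers Y'Y unfolding gb by (simp add: assoc)
  also have "\<dots> = Y' * (g * X)"
    using carriers unfolding X by (simp add: assoc)
  also have "\<dots> = p * ?M * q * a"
    using carriers Y'Y unfolding ga unfolding X by (simp add: assoc)
  finally have "b = 1\<^sub>m n"
    by (rule Uplus_conj_big_cell_eq_one[OF p q antidiagonal_dotw_w0 a b])
  then have "g = Y * Y'"
    using carriers gb YY' by (metis assoc right_mult_one_mat)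
  then show ?thesis
    using YY' by simp
qed

theorem proposition6p8:
  fixes n :: nat and u :: "nat \<Rightarrow> nat" and \<beta> :: "int list"
    and X Y :: "nat \<Rightarrow> complex mat" and g :: "complex mat"
  assumes "n \<ge> 1"
    and "u permutes {1..n}"
    and "double_braid_word n \<beta>"
    and "bruhat_le n u (demazure_of_dbw n \<beta>)"
    and "in_X n u \<beta> X Y"
    and "g \<in> SLn n"
    and "\<forall>c\<le>length \<beta>. same_flag n (X c) (g * X c) \<and> same_flag n (Y c) (g * Y c)"
  shows "g = 1\<^sub>m n"
proof (rule stabilizer_weak_w0_rel_trivial)
  show "Y 0 \<in> SLn n" "weak_rel n (w0 n) (Y 0) (X 0)"
    using assms(5) unfolding in_X_def Let_def by auto
  show "g \<in> carrier_mat n n"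
    using assms(6) unfolding SLn_def by simp
  show "same_flag n (X 0) (g * X 0)" "same_flag n (Y 0) (g * Y 0)"
    using assms(7) by auto
qed

end
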